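(* Let $P$ be a finite non-abelian exponent-critical $p$-group. Then $P=\langle a,b\rangle$ for some $a,b\in P$ with $a$ of maximal order in $P$ (i.e. of order $\exp(P)$). Moreover, $P$ is solvable of derived length $2$.
   Context: A finite group $G$ is exponent-critical if $\exp(G)$ is not the least common multiple of the exponents of the proper non-abelian subgroups of $G$. *)

theory Defs
  imports "HOL-Algebra.Algebra"
begin

definition group_exponent :: "('a, 'b) monoid_scheme \<Rightarrow> 'a set \<Rightarrow> nat" where
  "group_exponent G H = Lcm ((group.ord G) ` H)"

definition exponent_critical :: "('a, 'b) monoid_scheme \<Rightarrow> bool" where
  "exponent_critical G \<longleftrightarrow>
     group_exponent G (carrier G) \<noteq>
     Lcm {group_exponent G H | H. subgroup H G \<and> H \<noteq> carrier G
                                 \<and> \<not> comm_group (G\<lparr>carrier := H\<rparr>)}"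

definition p_group :: "nat \<Rightarrow> ('a, 'b) monoid_scheme \<Rightarrow> bool" where
  "p_group p G \<longleftrightarrow> group G \<and> finite (carrier G) \<and> Factorial_Ring.prime p
                    \<and> (\<exists>n. card (carrier G) = p ^ n)"

definition derived_length_two :: "('a, 'b) monoid_scheme \<Rightarrow> bool" where
  "derived_length_two G \<longleftrightarrow>
     derived G (carrier G) \<noteq> {\<one>\<^bsub>G\<^esub>} \<and>
     derived G (derived G (carrier G)) = {\<one>\<^bsub>G\<^esub>}"

end

theory Submission
  imports Defs
begin

(* In a finite p-group the element orders are powers of p, so exp(P) is the largest order and is
   attained. Exponent-criticality then says that every proper subgroup containing an element of
   order exp(P) is abelian. Some element a of maximal order is not central: otherwise, for a
   central element a of order e = p^j and a non-central x, both x and ax have order below e, so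
   (ax)^(e/p) = a^(e/p) x^(e/p) forces a^(e/p) = 1. A non-commuting pair a, b thus generates a
   non-abelian subgroup containing a, which must be all of P. A maximal subgroup M containing a is
   abelian; it is normal because normalizers grow in p-groups (M acts by conjugation on its right
   cosets, and the number of fixed cosets is divisible by p); and P/M is cyclic by maximality.
   Hence P' <= M is abelian, so P'' = 1, while P' <> 1 since P is not abelian. *)

section \<open>Element orders in finite p-groups\<close>

lemma (in group) ord_dvd_group_exponent:
  "x \<in> H \<Longrightarrow> ord x dvd group_exponent G H"
  unfolding group_exponent_def by (simp add: dvd_Lcm)

lemma group_exponent_mono:
  "H \<subseteq> K \<Longrightarrow> group_exponent G H dvd group_exponent G K"
  unfolding group_exponent_def by (intro Lcm_subset image_mono)

lemma (in group) p_group_ord_prime_power: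
  assumes "p_group p G" "x \<in> carrier G"
  obtains i where "ord x = p ^ i"
proof -
  obtain n where "order G = p ^ n" and "Factorial_Ring.prime p"
    using assms(1) unfolding p_group_def order_def by blast
  then show ?thesis
    using ord_dvd_group_order[OF assms(2)] divides_primepow_nat that by auto
qed

lemma (in group) p_group_ord_le_imp_dvd:
  assumes "p_group p G" "x \<in> carrier G" "y \<in> carrier G" "ord x \<le> ord y"
  shows "ord x dvd ord y"
proof -
  obtain i j where "ord x = p ^ i" "ord y = p ^ j"
    using p_group_ord_prime_power assms(1-3) by metis
  moreover have "p > 1"
    using assms(1) prime_gt_1_nat unfolding p_group_def by blast
  ultimately show ?thesis
    using assms(4) by (simp add: le_imp_power_dvd)
qed

lemma (in group) p_group_exists_ord_eq_exponent:
  assumes "p_group p G"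
  obtains a where "a \<in> carrier G" "ord a = group_exponent G (carrier G)"
proof -
  have "finite (ord ` carrier G)"
    using assms unfolding p_group_def by simp
  then obtain a where a: "a \<in> carrier G" "ord a = Max (ord ` carrier G)"
    using Max_in[of "ord ` carrier G"] one_closed by (metis empty_iff image_iff)
  have "ord x dvd ord a" if "x \<in> carrier G" for x
  proof (rule p_group_ord_le_imp_dvd[OF assms that a(1)])
    show "ord x \<le> ord a"
      using Max_ge[OF \<open>finite (ord ` carrier G)\<close>, of "ord x"] a(2) that by simp
  qed
  then have "group_exponent G (carrier G) = ord a"
    unfolding group_exponent_def using a(1)
    by (intro dvd_antisym Lcm_least dvd_Lcm) auto
  with a(1) that show ?thesis by simp
qed

lemma (in group) p_group_pow_exponent_div_prime_eq_one_iff: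
  assumes "p_group p G" "x \<in> carrier G" "group_exponent G (carrier G) \<noteq> 1"
  shows "x [^] (group_exponent G (carrier G) div p) = \<one> \<longleftrightarrow>
    ord x \<noteq> group_exponent G (carrier G)"
proof -
  obtain a where a: "a \<in> carrier G" "ord a = group_exponent G (carrier G)"
    using p_group_exists_ord_eq_exponent[OF assms(1)] .
  obtain i j where ij: "ord x = p ^ i" "ord a = p ^ j"
    using p_group_ord_prime_power assms(1,2) a(1) by metis
  have "p > 1"
    using assms(1) prime_gt_1_nat unfolding p_group_def by blast
  have "j \<noteq> 0"
  proof
    assume "j = 0"
    then show False
      using assms(3) a(2) ij(2) by simp
  qed
  then have exp_div: "ord a div p = p ^ (j - 1)"
    using power_diff[of p 1 j] ij(2) \<open>p > 1\<close> by simp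
  have "i \<le> j"
    using ord_dvd_group_exponent[OF assms(2)] a(2) ij \<open>p > 1\<close> power_dvd_imp_le by metis
  then have "ord x dvd ord a div p \<longleftrightarrow> i \<noteq> j"
    using exp_div ij \<open>p > 1\<close> \<open>j \<noteq> 0\<close> by (auto simp: le_imp_power_dvd dest: power_dvd_imp_le)
  also have "i \<noteq> j \<longleftrightarrow> ord x \<noteq> ord a"
    using ij \<open>p > 1\<close> by (simp add: power_inject_exp)
  finally show ?thesis
    using pow_eq_id[OF assms(2)] a(2) by simp
qed

lemma (in group) p_group_exists_noncentral_of_max_ord:
  assumes "p_group p G" "\<not> comm_group G"
  obtains a b where "a \<in> carrier G" "b \<in> carrier G"
    "ord a = group_exponent G (carrier G)" "a \<otimes> b \<noteq> b \<otimes> a"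
proof -
  let ?e = "group_exponent G (carrier G)"
  obtain x y where xy: "x \<in> carrier G" "y \<in> carrier G" "x \<otimes> y \<noteq> y \<otimes> x"
    using assms(2) group_comm_groupI by blast
  have "?e \<noteq> 1"
    using ord_dvd_group_exponent[OF xy(1)] ord_eq_1[OF xy(1)] xy by auto
  note small_pow = p_group_pow_exponent_div_prime_eq_one_iff[OF assms(1) _ \<open>?e \<noteq> 1\<close>]
  have "\<exists>a \<in> carrier G. ord a = ?e \<and> (\<exists>b \<in> carrier G. a \<otimes> b \<noteq> b \<otimes> a)"
  proof (rule ccontr)
    assume "\<not> ?thesis"
    then have central: "a \<otimes> b = b \<otimes> a"
      if "a \<in> carrier G" "b \<in> carrier G" "ord a = ?e" for a b
      using that by blast
    obtain a where a: "a \<in> carrier G" "ord a = ?e"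
      using p_group_exists_ord_eq_exponent[OF assms(1)] .
    have "y \<otimes> (a \<otimes> x) = a \<otimes> (y \<otimes> x)"
      using central[OF a(1) xy(2) a(2)] a(1) xy by (simp add: m_assoc[symmetric])
    then have "a \<otimes> x \<otimes> y \<noteq> y \<otimes> (a \<otimes> x)"
      using a(1) xy by (simp add: m_assoc)
    then have "ord (a \<otimes> x) \<noteq> ?e"
      using central[OF _ xy(2)] a(1) xy(1) by blast
    then have "(a \<otimes> x) [^] (?e div p) = \<one>"
      using small_pow[of "a \<otimes> x"] a(1) xy(1) by simp
    moreover have "x [^] (?e div p) = \<one>"
      using small_pow[OF xy(1)] central[OF xy(1,2)] xy(3) by blast
    ultimately have "a [^] (?e div p) = \<one>"
      using pow_mult_distrib[OF central[OF a(1) xy(1) a(2)]] a(1) xy(1) by simp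
    then show False
      using small_pow[OF a(1)] a(2) by simp
  qed
  then show ?thesis
    using that by blast
qed

section \<open>Exponent-critical groups\<close>

lemma (in group) subgroup_comm_group_m_comm:
  assumes "subgroup H G" "comm_group (G\<lparr>carrier := H\<rparr>)" "u \<in> H" "v \<in> H"
  shows "u \<otimes> v = v \<otimes> u"
  using comm_groupE(4)[OF assms(2)] assms(3,4) by simp

lemma (in group) generate_singleton_comm_group:
  assumes "a \<in> carrier G"
  shows "comm_group (G\<lparr>carrier := generate G {a}\<rparr>)"
  using group.cyclic_imp_abelian_group[OF group_subgroup_generated cyclic_group_generated, of a] assms
  unfolding subgroup_generated_def by simp

lemma (in group) exponent_critical_subgroup_comm_group:
  assumes "exponent_critical G" "subgroup H G" "H \<noteq> carrier G"
    and "a \<in> H" "ord a = group_exponent G (carrier G)"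
  shows "comm_group (G\<lparr>carrier := H\<rparr>)"
proof (rule ccontr)
  let ?e = "group_exponent G (carrier G)"
  let ?S = "{group_exponent G K | K. subgroup K G \<and> K \<noteq> carrier G
                                   \<and> \<not> comm_group (G\<lparr>carrier := K\<rparr>)}"
  assume "\<not> comm_group (G\<lparr>carrier := H\<rparr>)"
  have exp_dvd: "group_exponent G K dvd ?e" if "subgroup K G" for K
    using group_exponent_mono subgroup.subset[OF that] .
  have "ord a dvd group_exponent G H"
    using ord_dvd_group_exponent[OF assms(4)] .
  then have "group_exponent G H = ?e"
    using exp_dvd[OF assms(2)] assms(5) by (simp add: dvd_antisym)
  then have "?e \<in> ?S"
    using assms(2,3) \<open>\<not> comm_group (G\<lparr>carrier := H\<rparr>)\<close> by force
  then have "Lcm ?S = ?e"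
    using exp_dvd by (intro dvd_antisym Lcm_least dvd_Lcm) auto
  then show False
    using assms(1) unfolding exponent_critical_def by simp
qed

lemma (in group) exponent_critical_noncommuting_generate:
  assumes "exponent_critical G" "a \<in> carrier G" "b \<in> carrier G"
    and "ord a = group_exponent G (carrier G)" "a \<otimes> b \<noteq> b \<otimes> a"
  shows "generate G {a, b} = carrier G"
proof (rule ccontr)
  let ?H = "generate G {a, b}"
  assume "?H \<noteq> carrier G"
  have "subgroup ?H G" "a \<in> ?H" "b \<in> ?H"
    using assms(2,3) generate_is_subgroup by (auto intro: generate.incl)
  then show False
    using exponent_critical_subgroup_comm_group[OF assms(1) _ \<open>?H \<noteq> carrier G\<close> _ assms(4)]
      subgroup_comm_group_m_comm assms(5) by blast
qed

section \<open>Fixed points of p-group actions\<close>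

lemma (in group_action) prime_dvd_card_orbit:
  assumes "Factorial_Ring.prime p" "card (carrier G) = p ^ n"
    and "x \<in> E" "g \<in> carrier G" "\<phi> g x \<noteq> x"
  shows "p dvd card (orbit G \<phi> x)"
proof -
  interpret G: group G
    using group_hom group_hom.axioms(1) by blast
  have "card (orbit G \<phi> x) dvd p ^ n"
    using orbit_stabilizer_theorem[OF assms(3)] assms(2) unfolding order_def
    by (metis dvd_triv_left)
  then obtain i where i: "card (orbit G \<phi> x) = p ^ i"
    using divides_primepow_nat[OF assms(1)] by blast
  have "{x, \<phi> g x} \<subseteq> orbit G \<phi> x"
    using orbit_refl[OF assms(3)] assms(4) unfolding orbit_def by blast
  moreover have "finite (orbit G \<phi> x)"
    using i assms(1) by (intro card_ge_0_finite) (simp add: prime_gt_0_nat)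
  ultimately have "card (orbit G \<phi> x) \<noteq> 1"
    using assms(5) card_mono[of "orbit G \<phi> x" "{x, \<phi> g x}"] by auto
  then show ?thesis
    using i by (cases i) auto
qed

lemma (in group_action) orbit_subset_non_fixed_points:
  assumes "A \<subseteq> E" "\<And>g x. g \<in> carrier G \<Longrightarrow> x \<in> A \<Longrightarrow> \<phi> g x \<in> A"
    and "x \<in> A" "\<exists>g \<in> carrier G. \<phi> g x \<noteq> x"
  shows "orbit G \<phi> x \<subseteq> {y \<in> A. \<exists>g \<in> carrier G. \<phi> g y \<noteq> y}"
proof
  fix y assume y: "y \<in> orbit G \<phi> x"
  have "y \<in> A"
    using y assms(2,3) unfolding orbit_def by blast
  moreover have "\<exists>g \<in> carrier G. \<phi> g y \<noteq> y"
  proof (rule ccontr)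
    assume "\<not> (\<exists>g \<in> carrier G. \<phi> g y \<noteq> y)"
    then have "orbit G \<phi> y = {y}"
      using orbit_refl[of y] \<open>y \<in> A\<close> assms(1) unfolding orbit_def by auto
    moreover have "x \<in> orbit G \<phi> y"
      using orbit_sym[OF _ _ y] assms(1,3) \<open>y \<in> A\<close> by blast
    ultimately show False
      using assms(4) \<open>\<not> (\<exists>g \<in> carrier G. \<phi> g y \<noteq> y)\<close> by simp
  qed
  ultimately show "y \<in> {y \<in> A. \<exists>g \<in> carrier G. \<phi> g y \<noteq> y}"
    by blast
qed

lemma (in group_action) card_fixed_points_mod_prime:
  assumes "Factorial_Ring.prime p" "card (carrier G) = p ^ n"
    and "finite A" "A \<subseteq> E" "\<And>g x. g \<in> carrier G \<Longrightarrow> x \<in> A \<Longrightarrow> \<phi> g x \<in> A"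
  shows "card {x \<in> A. \<forall>g \<in> carrier G. \<phi> g x = x} mod p = card A mod p"
proof -
  define F where "F = {x \<in> A. \<forall>g \<in> carrier G. \<phi> g x = x}"
  have orbit_sub: "orbit G \<phi> x \<subseteq> A - F" if "x \<in> A - F" for x
    using orbit_subset_non_fixed_points[OF assms(4,5)] that unfolding F_def by blast
  have "A - F = \<Union> (orbit G \<phi> ` (A - F))"
    using orbit_sub orbit_refl assms(4) by blast
  moreover have "pairwise disjnt (orbit G \<phi> ` (A - F))"
    using disjoint_union assms(4) unfolding orbits_def pairwise_def disjnt_def by blast
  moreover have "finite (orbit G \<phi> x)" if "x \<in> A - F" for x
    using orbit_sub[OF that] assms(3) finite_subset by blast
  ultimately have "card (A - F) = sum card (orbit G \<phi> ` (A - F))"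
    by (metis card_Union_disjoint imageE)
  moreover have "p dvd card B" if "B \<in> orbit G \<phi> ` (A - F)" for B
    using that prime_dvd_card_orbit[OF assms(1,2)] assms(4) unfolding F_def by blast
  ultimately have "p dvd card (A - F)"
    by (metis dvd_sum)
  moreover have "card A = card F + card (A - F)"
    using assms(3) card_Diff_subset[of F A] card_mono[of A F] unfolding F_def
    by (auto intro: finite_subset)
  ultimately have "card A mod p = card F mod p"
    by (metis dvd_imp_mod_0 mod_add_right_eq add_0_right)
  then show ?thesis
    unfolding F_def by simp
qed

section \<open>Normalizers and maximal subgroups of p-groups\<close>

lemma (in group) conj_closed_imp_in_normalizer:
  assumes "finite M" "M \<subseteq> carrier G" "x \<in> carrier G"
    and "\<And>h. h \<in> M \<Longrightarrow> x \<otimes> h \<otimes> inv x \<in> M"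
  shows "x \<in> normalizer G M"
proof -
  have conj_image: "x <# M #> inv x = (\<lambda>h. x \<otimes> h \<otimes> inv x) ` M"
    unfolding l_coset_def r_coset_def by auto
  have "inj_on (\<lambda>h. x \<otimes> h \<otimes> inv x) M"
    using assms(2,3) conjugation_is_inj by (intro inj_onI) blast
  then have "card (x <# M #> inv x) = card M"
    unfolding conj_image by (rule card_image)
  moreover have "x <# M #> inv x \<subseteq> M"
    unfolding conj_image using assms(4) by blast
  ultimately have "x <# M #> inv x = M"
    using assms(1) card_subset_eq by blast
  then show ?thesis
    unfolding normalizer_def stabilizer_def using assms(2,3) by simp
qed

lemma (in group) conj_rcoset_subgroup:
  assumes "subgroup M G" "h \<in> M" "x \<in> carrier G"
  shows "h <# (M #> x) #> inv h = M #> (x \<otimes> inv h)"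
proof -
  have M: "M \<subseteq> carrier G" "h \<in> carrier G"
    using assms(1,2) subgroup.subset by auto
  have "h <# M = M"
    using l_repr_independence[of h \<one> M] lcos_mult_one[OF M(1)] assms(1,2) by simp
  then show ?thesis
    using M assms(3) by (simp add: coset_assoc coset_mult_assoc)
qed

lemma (in group) p_group_subgroup:
  assumes "p_group p G" "subgroup H G"
  shows "p_group p (G\<lparr>carrier := H\<rparr>)"
proof -
  obtain n where "card (rcosets H) * card H = p ^ n" "Factorial_Ring.prime p"
    using lagrange[OF assms(2)] assms(1) unfolding p_group_def order_def by auto
  then have "\<exists>i. card H = p ^ i"
    using divides_primepow_nat by (metis dvd_triv_right)
  moreover have "finite H"
    using assms(1) subgroup.subset[OF assms(2)] finite_subset unfolding p_group_def by blast
  ultimately show ?thesis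
    using subgroup_imp_group[OF assms(2)] \<open>Factorial_Ring.prime p\<close> unfolding p_group_def by simp
qed

lemma (in group) p_group_prime_dvd_card_rcosets:
  assumes "p_group p G" "subgroup H G" "H \<noteq> carrier G"
  shows "p dvd card (rcosets H)"
proof -
  have index: "card (rcosets H) * card H = card (carrier G)"
    using lagrange[OF assms(2)] unfolding order_def .
  obtain n where prime: "Factorial_Ring.prime p" and "finite (carrier G)"
    and "card (carrier G) = p ^ n"
    using assms(1) unfolding p_group_def by auto
  then obtain k where k: "card (rcosets H) = p ^ k"
    using index divides_primepow_nat[OF prime] by (metis dvd_triv_left)
  have "k \<noteq> 0"
  proof
    assume "k = 0"
    then have "card H = card (carrier G)"
      using index k by simp
    then show False
      using card_subset_eq[OF \<open>finite (carrier G)\<close> subgroup.subset[OF assms(2)]] assms(3) by simp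
  qed
  then show ?thesis
    using k by simp
qed

lemma (in group) p_group_prime_dvd_card_conj_fixed_rcosets:
  assumes "p_group p G" "subgroup M G" "M \<noteq> carrier G"
  shows "p dvd card {T \<in> rcosets M. \<forall>h \<in> M. h <# T #> inv h = T}"
proof -
  let ?conj = "\<lambda>g. \<lambda>H \<in> {H. H \<subseteq> carrier G}. g <# H #> inv g"
  interpret M: group_action "G\<lparr>carrier := M\<rparr>" "{H. H \<subseteq> carrier G}" ?conj
    using group_action.induced_action[OF action_by_conjugation_on_power_set assms(2)] .
  obtain i where prime: "Factorial_Ring.prime p" and "card M = p ^ i"
    using p_group_subgroup[OF assms(1,2)] unfolding p_group_def by auto
  have M_sub: "M \<subseteq> carrier G"
    using assms(2) subgroup.subset by blast
  have rcosets_sub: "rcosets M \<subseteq> {H. H \<subseteq> carrier G}"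
    using rcosets_subset_PowG[OF assms(2)] by blast
  have "finite (rcosets M)"
    using finite_subset[OF rcosets_subset_PowG[OF assms(2)]] assms(1) unfolding p_group_def by simp
  moreover have "?conj h T \<in> rcosets M" if h: "h \<in> M" and T: "T \<in> rcosets M" for h T
  proof -
    obtain x where x: "x \<in> carrier G" "T = M #> x"
      using T unfolding RCOSETS_def by blast
    moreover have "x \<otimes> inv h \<in> carrier G"
      using x(1) h M_sub by blast
    ultimately show ?thesis
      using conj_rcoset_subgroup[OF assms(2) h x(1)] r_coset_subset_G[OF M_sub x(1)]
        rcosetsI[OF M_sub] by simp
  qed
  ultimately have "card {T \<in> rcosets M. \<forall>h \<in> M. ?conj h T = T} mod p = card (rcosets M) mod p"
    using M.card_fixed_points_mod_prime[OF prime _ _ rcosets_sub] \<open>card M = p ^ i\<close> by simp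
  moreover have "{T \<in> rcosets M. \<forall>h \<in> M. ?conj h T = T} = {T \<in> rcosets M. \<forall>h \<in> M. h <# T #> inv h = T}"
    using rcosets_sub by auto
  ultimately show ?thesis
    using p_group_prime_dvd_card_rcosets[OF assms] by (simp add: dvd_eq_mod_eq_0)
qed

lemma (in group) p_group_exists_conj_fixed_rcoset:
  assumes "p_group p G" "subgroup M G" "M \<noteq> carrier G"
  obtains x where "x \<in> carrier G" "x \<notin> M" "\<And>h. h \<in> M \<Longrightarrow> h <# (M #> x) #> inv h = M #> x"
proof -
  define F where "F = {T \<in> rcosets M. \<forall>h \<in> M. h <# T #> inv h = T}"
  have M_sub: "M \<subseteq> carrier G"
    using assms(2) subgroup.subset by blast
  have "p dvd card F"
    unfolding F_def using p_group_prime_dvd_card_conj_fixed_rcosets[OF assms] .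
  have "finite F"
    using finite_subset[OF rcosets_subset_PowG[OF assms(2)]] assms(1)
    unfolding F_def p_group_def by simp
  have "M \<in> F"
  proof -
    have "M #> \<one> \<in> rcosets M"
      using M_sub by (intro rcosetsI) auto
    moreover have "M #> (\<one> \<otimes> inv h) = M" if "h \<in> M" for h
      using subgroup.rcos_const[OF assms(2) is_group] subgroup.m_inv_closed[OF assms(2) that]
        that M_sub by auto
    ultimately show ?thesis
      using conj_rcoset_subgroup[OF assms(2) _ one_closed] M_sub unfolding F_def by simp
  qed
  have "\<not> F \<subseteq> {M}"
  proof
    assume "F \<subseteq> {M}"
    then have "card F \<le> 1"
      using card_mono[of "{M}" F] by simp
    moreover have "card F > 0"
      using \<open>finite F\<close> \<open>M \<in> F\<close> card_gt_0_iff by blast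
    then have "p \<le> card F"
      using dvd_imp_le[OF \<open>p dvd card F\<close>] by simp
    moreover have "p > 1"
      using assms(1) prime_gt_1_nat unfolding p_group_def by blast
    ultimately show False
      by simp
  qed
  then obtain T x where "T \<in> F" "T \<noteq> M" "x \<in> carrier G" "T = M #> x"
    unfolding F_def RCOSETS_def by blast
  moreover have "x \<notin> M"
    using subgroup.rcos_const[OF assms(2) is_group, of x] calculation by auto
  ultimately show ?thesis
    using that unfolding F_def by blast
qed

lemma (in group) p_group_normalizer_grows:
  assumes "p_group p G" "subgroup M G" "M \<noteq> carrier G"
  obtains x where "x \<in> normalizer G M" "x \<notin> M"
proof -
  obtain x where x: "x \<in> carrier G" "x \<notin> M"
    and fixed: "\<And>h. h \<in> M \<Longrightarrow> h <# (M #> x) #> inv h = M #> x"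
    using p_group_exists_conj_fixed_rcoset[OF assms] by blast
  have M_sub: "M \<subseteq> carrier G"
    using assms(2) subgroup.subset by blast
  have "x \<otimes> h \<otimes> inv x \<in> M" if "h \<in> M" for h
  proof -
    have "inv h \<in> M" "h \<in> carrier G"
      using subgroup.m_inv_closed[OF assms(2) that] that M_sub by auto
    then have "M #> (x \<otimes> h) = M #> x"
      using fixed conj_rcoset_subgroup[OF assms(2) _ x(1)] by fastforce
    then have "x \<otimes> h \<in> M #> x"
      using rcos_self[OF _ assms(2)] x(1) \<open>h \<in> carrier G\<close> by (metis m_closed)
    then show ?thesis
      using subgroup.rcos_module_imp[OF assms(2) is_group x(1)] by blast
  qed
  moreover have "finite M"
    using assms(1) M_sub finite_subset unfolding p_group_def by blast
  ultimately have "x \<in> normalizer G M"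
    using conj_closed_imp_in_normalizer M_sub x(1) by blast
  then show ?thesis
    using that x(2) by simp
qed

definition maximal_subgroup :: "('a, 'b) monoid_scheme \<Rightarrow> 'a set \<Rightarrow> bool" where
  "maximal_subgroup G M \<longleftrightarrow> subgroup M G \<and> M \<noteq> carrier G
     \<and> (\<forall>H. subgroup H G \<and> M \<subseteq> H \<longrightarrow> H = M \<or> H = carrier G)"

lemma (in group) exists_maximal_subgroup:
  assumes "finite (carrier G)" "subgroup H G" "H \<noteq> carrier G"
  obtains M where "maximal_subgroup G M" "H \<subseteq> M"
proof -
  define S where "S = {K. subgroup K G \<and> H \<subseteq> K \<and> K \<noteq> carrier G}"
  have "S \<subseteq> Pow (carrier G)"
    unfolding S_def using subgroup.subset by blast
  then have "finite S"
    using assms(1) finite_subset by blast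
  moreover have "H \<in> S"
    unfolding S_def using assms(2,3) by simp
  ultimately obtain M where "M \<in> S" and "\<forall>K \<in> S. M \<subseteq> K \<longrightarrow> M = K"
    using finite_has_maximal2[of S H] by auto
  then have "maximal_subgroup G M" "H \<subseteq> M"
    unfolding maximal_subgroup_def S_def by auto
  then show ?thesis
    using that by simp
qed

lemma (in group) p_group_maximal_subgroup_normal:
  assumes "p_group p G" "maximal_subgroup G M"
  shows "M \<lhd> G"
proof -
  have M: "subgroup M G" "M \<noteq> carrier G"
    and maximal: "\<And>H. subgroup H G \<Longrightarrow> M \<subseteq> H \<Longrightarrow> H = M \<or> H = carrier G"
    using assms(2) unfolding maximal_subgroup_def by auto
  obtain x where "x \<in> normalizer G M" "x \<notin> M"
    using p_group_normalizer_grows[OF assms(1) M] by blast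
  moreover have "M \<subseteq> normalizer G M"
    using subgroup.subset[OF normal_imp_subgroup[OF subgroup_in_normalizer[OF M(1)]]] by simp
  moreover have "subgroup (normalizer G M) G"
    using normalizer_imp_subgroup[OF subgroup.subset[OF M(1)]] .
  ultimately have "normalizer G M = carrier G"
    using maximal by blast
  then show ?thesis
    using subgroup_in_normalizer[OF M(1)] by simp
qed

lemma (in group_hom) subgroup_vimage:
  assumes "subgroup K H"
  shows "subgroup (h -` K \<inter> carrier G) G"
proof (rule G.subgroupI)
  show "h -` K \<inter> carrier G \<noteq> {}"
    using subgroup.one_closed[OF assms] by force
qed (use subgroup.m_inv_closed[OF assms] subgroup.m_closed[OF assms] in auto)

lemma (in group) maximal_normal_subgroup_cyclic_quotient:
  assumes "maximal_subgroup G M" "M \<lhd> G"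
  shows "cyclic_group (G Mod M)"
proof -
  interpret M: normal M G
    by (rule assms(2))
  interpret Q: group "G Mod M"
    by (rule M.factorgroup_is_group)
  interpret \<pi>: group_hom G "G Mod M" "(#>) M"
    using M.r_coset_hom_Mod by unfold_locales
  obtain x where x: "x \<in> carrier G" "x \<notin> M"
    using assms(1) M.subset unfolding maximal_subgroup_def by blast
  define C where "C = generate (G Mod M) {M #> x}"
  have "M #> x \<in> carrier (G Mod M)"
    using x(1) by simp
  then have C: "subgroup C (G Mod M)" "C = range (\<lambda>n::int. (M #> x) [^]\<^bsub>G Mod M\<^esub> n)"
    unfolding C_def using Q.generate_is_subgroup[of "{M #> x}"] Q.generate_pow by auto
  define K where "K = (#>) M -` C \<inter> carrier G"
  have "subgroup K G"
    unfolding K_def using \<pi>.subgroup_vimage[OF C(1)] .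
  moreover have "M \<subseteq> K"
    unfolding K_def using M.rcos_const[OF is_group] subgroup.one_closed[OF C(1)] M.subset by auto
  moreover have "x \<in> K"
    unfolding K_def C_def using x(1) by (auto intro: generate.incl)
  ultimately have "K = carrier G"
    using assms(1) x(2) unfolding maximal_subgroup_def by blast
  then have "carrier (G Mod M) = C"
    using subgroup.subset[OF C(1)] unfolding K_def carrier_FactGroup by blast
  then show ?thesis
    using Q.cyclic_group C(2) \<open>M #> x \<in> carrier (G Mod M)\<close> by blast
qed

section \<open>Derived length\<close>

lemma (in group) derived_eq_one_imp_comm_group:
  assumes "derived G (carrier G) = {\<one>}"
  shows "comm_group G"
proof (rule group_comm_groupI)
  fix x y assume xy: "x \<in> carrier G" "y \<in> carrier G"
  then have "x \<otimes> y \<otimes> inv x \<otimes> inv y \<in> derived G (carrier G)"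
    unfolding derived_def by (blast intro: generate.incl)
  then have "x \<otimes> y \<otimes> inv x \<otimes> inv y = \<one>"
    using assms by simp
  then have "x \<otimes> y \<otimes> inv x = y"
    using xy by (simp add: inv_solve_right')
  then show "x \<otimes> y = y \<otimes> x"
    using xy by (simp add: inv_solve_right')
qed

lemma (in group) derived_length_two_of_abelian_by_abelian:
  assumes "M \<lhd> G" "comm_group (G\<lparr>carrier := M\<rparr>)" "comm_group (G Mod M)" "\<not> comm_group G"
  shows "derived_length_two G"
proof -
  have M: "subgroup M G"
    using assms(1) normal_imp_subgroup by blast
  have "derived G (derived G (carrier G)) \<subseteq> derived G M"
    using mono_derived derived_minimal[OF assms(1,3)] by blast
  also have "derived G M = derived (G\<lparr>carrier := M\<rparr>) M"
    using derived_consistent[OF subset_refl M] by simp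
  also have "\<dots> = {\<one>}"
    using comm_group.derived_eq_singleton[OF assms(2), of M] by simp
  finally have "derived G (derived G (carrier G)) = {\<one>}"
    using subgroup.one_closed[OF derived_is_subgroup[OF derived_in_carrier]] by blast
  moreover have "derived G (carrier G) \<noteq> {\<one>}"
    using derived_eq_one_imp_comm_group assms(4) by blast
  ultimately show ?thesis
    unfolding derived_length_two_def by blast
qed

lemma (in group) derived_length_two_imp_solvable:
  assumes "derived_length_two G"
  shows "solvable G"
proof -
  have "(derived G ^^ 2) (carrier G) = {\<one>}"
    using assms unfolding derived_length_two_def by (simp add: numeral_2_eq_2)
  then show ?thesis
    using solvable_iff_trivial_derived_seq by blast
qed

theorem mainTheorem11:
  fixes P (structure) and p :: nat
  assumes "p_group p P"
    and "\<not> comm_group P"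
    and "exponent_critical P"
  shows "(\<exists>a\<in>carrier P. \<exists>b\<in>carrier P.
            generate P {a, b} = carrier P \<and>
            group.ord P a = group_exponent P (carrier P))
         \<and> solvable P \<and> derived_length_two P"
proof -
  interpret group P
    using assms(1) unfolding p_group_def by blast
  obtain a b where ab: "a \<in> carrier P" "b \<in> carrier P"
    "ord a = group_exponent P (carrier P)" "a \<otimes> b \<noteq> b \<otimes> a"
    using p_group_exists_noncentral_of_max_ord[OF assms(1,2)] by blast
  have "generate P {a} \<noteq> carrier P"
    using subgroup_comm_group_m_comm[OF generate_is_subgroup generate_singleton_comm_group]
      generate.incl[of a "{a}"] ab by blast
  then obtain M where M: "maximal_subgroup P M" "generate P {a} \<subseteq> M"
    using exists_maximal_subgroup generate_is_subgroup assms(1) ab(1)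
    unfolding p_group_def by blast
  have "M \<lhd> P"
    using p_group_maximal_subgroup_normal[OF assms(1) M(1)] .
  moreover have "comm_group (P\<lparr>carrier := M\<rparr>)"
    using exponent_critical_subgroup_comm_group[OF assms(3) _ _ _ ab(3)] M generate.incl[of a "{a}"]
    unfolding maximal_subgroup_def by blast
  moreover have "comm_group (P Mod M)"
    using maximal_normal_subgroup_cyclic_quotient[OF M(1) \<open>M \<lhd> P\<close>]
      group.cyclic_imp_abelian_group normal.factorgroup_is_group[OF \<open>M \<lhd> P\<close>] by blast
  ultimately have "derived_length_two P"
    using derived_length_two_of_abelian_by_abelian assms(2) by blast
  then show ?thesis
    using exponent_critical_noncommuting_generate[OF assms(3) ab] ab derived_length_two_imp_solvable
    by blast
qed

end
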